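(* Let $r\in\mathbb{N}$, $d\in(0,\pi]$ and $\lambda\in(0,d/3]$. Then $$\|\mathcal{E}_{r,d,\lambda}-\mathcal{E}_{r,d}\|\le c_5\lambda,$$ where $c_5>0$ depends only on $r$.
   Context: Let $\gamma_d:=1-d/\pi$. $\mathcal{E}_{r,d}$ denotes the $2\pi$-periodic function with $\mathcal{E}_{r,d}\in C^{r-1}(\mathbb{R})$, $\int_{-\pi}^{\pi}\mathcal{E}_{r,d}(x)\,dx=0$, and $\mathcal{E}_{r,d}^{(r)}(x)=\operatorname{sign}x-\gamma_d$ for $x\in(-d,2\pi-d)\setminus\{0\}$. Fix $S\in C^\infty(\mathbb{R})$, a monotone odd function with $S(x)=\operatorname{sign}x$ for $|x|\ge 1$. Define $\tilde S_{\lambda,d}(x):=S\big((x-2\lambda)/\lambda\big)$ for $x\in[0,2\pi-d]$ and $\tilde S_{\lambda,d}(x):=-S\big((x-2\lambda+d)/\lambda\big)$ for $x\in[-d,0]$, and $S_{\lambda,d}(x):=\tilde S_{\lambda,d}(x)-\gamma_d$ for $x\in[-d,2\pi-d]$. Then $\mathcal{E}_{r,d,\lambda}$ denotes the $2\pi$-periodic function in $C^\infty(\mathbb{R})$ with $\int_{-\pi}^{\pi}\mathcal{E}_{r,d,\lambda}(x)\,dx=0$ and $\mathcal{E}_{r,d,\lambda}^{(r)}(x)=S_{\lambda,d}(x)$ for $x\in[-d,2\pi-d]$. For a $2\pi$-periodic continuous $g$, $\|g\|=\max_{x\in\mathbb{R}}|g(x)|$. *)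

theory Defs
  imports "HOL-Analysis.Analysis"
begin

definition Ck :: "nat \<Rightarrow> (real \<Rightarrow> real) \<Rightarrow> bool" where
  "Ck k f \<longleftrightarrow> (\<forall>j<k. \<forall>x. ((deriv ^^ j) f has_real_derivative (deriv ^^ Suc j) f x) (at x))
                 \<and> continuous_on UNIV ((deriv ^^ k) f)"

definition Cinf :: "(real \<Rightarrow> real) \<Rightarrow> bool" where
  "Cinf f \<longleftrightarrow> (\<forall>k. Ck k f)"

definition periodic2pi :: "(real \<Rightarrow> real) \<Rightarrow> bool" where
  "periodic2pi f \<longleftrightarrow> (\<forall>x. f (x + 2 * pi) = f x)"

definition gam :: "real \<Rightarrow> real" where
  "gam d = 1 - d / pi"

text \<open>The perfect spline E_{r,d} (r \<ge> 1): 2pi-periodic, C^{r-1}, mean zero, and its r-th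
  derivative (= derivative of the (r-1)-th one) equals sign x - gam d on (-d, 2pi-d) minus 0.\<close>
definition Erd :: "nat \<Rightarrow> real \<Rightarrow> real \<Rightarrow> real" where
  "Erd r d = (THE f. periodic2pi f \<and> Ck (r - 1) f \<and> integral {-pi..pi} f = 0 \<and>
     (\<forall>x\<in>{-d<..<2*pi-d} - {0}. ((deriv ^^ (r - 1)) f has_real_derivative (sgn x - gam d)) (at x)))"

definition Stilde :: "(real \<Rightarrow> real) \<Rightarrow> real \<Rightarrow> real \<Rightarrow> real \<Rightarrow> real" where
  "Stilde S lam d x = (if 0 \<le> x then S ((x - 2 * lam) / lam) else - S ((x - 2 * lam + d) / lam))"

definition Sld :: "(real \<Rightarrow> real) \<Rightarrow> real \<Rightarrow> real \<Rightarrow> real \<Rightarrow> real" where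
  "Sld S lam d x = Stilde S lam d x - gam d"

definition Erdl :: "(real \<Rightarrow> real) \<Rightarrow> nat \<Rightarrow> real \<Rightarrow> real \<Rightarrow> real \<Rightarrow> real" where
  "Erdl S r d lam = (THE f. periodic2pi f \<and> Cinf f \<and> integral {-pi..pi} f = 0 \<and>
     (\<forall>x\<in>{-d..2*pi-d}. (deriv ^^ r) f x = Sld S lam d x))"

definition unorm :: "(real \<Rightarrow> real) \<Rightarrow> real" where
  "unorm g = (SUP x. \<bar>g x\<bar>)"

end

theory Submission
  imports Defs
begin

text \<open>Both functions are iterated mean-zero periodic primitives: \<open>E\<^sub>r\<^sub>,\<^sub>d\<^sub>,\<^sub>\<lambda>\<close> is the
  \<open>r\<close>-fold primitive of the periodic extension of \<open>S\<^sub>\<lambda>\<^sub>,\<^sub>d\<close>, and \<open>E\<^sub>r\<^sub>,\<^sub>d\<close> is the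
  \<open>(r-1)\<close>-fold primitive of the mean-zero periodic tent function whose derivative is
  \<open>sign x - \<gamma>\<^sub>d\<close> on \<open>(-d, 2\<pi> - d)\<close>. Taking the mean-zero primitive is \<open>\<pi>\<close>-Lipschitz in the
  sup norm (the primitive has a zero and every point is within \<open>\<pi>\<close> of it modulo the period),
  so it suffices to show that the first primitive of \<open>S\<^sub>\<lambda>\<^sub>,\<^sub>d\<close> differs from the tent by at
  most \<open>24\<lambda>\<close>. Their difference is periodic with mean zero, and its derivative
  \<open>S\<^sub>\<lambda>\<^sub>,\<^sub>d + \<gamma>\<^sub>d - sign\<close> is bounded by 2 and vanishes outside two intervals of length \<open>3\<lambda>\<close>
  per period, so it oscillates by at most \<open>24\<lambda>\<close> and has a zero.\<close>

section \<open>Smooth functions\<close>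

lemma continuous_on_if_has_derivative:
  "(\<And>x. (F has_real_derivative f x) (at x)) \<Longrightarrow> continuous_on UNIV F"
  by (blast intro: DERIV_isCont continuous_at_imp_continuous_on)

lemma Cinf_iff_has_derivs:
  "Cinf f \<longleftrightarrow> (\<forall>j x. ((deriv ^^ j) f has_real_derivative (deriv ^^ Suc j) f x) (at x))"
proof
  assume "\<forall>j x. ((deriv ^^ j) f has_real_derivative (deriv ^^ Suc j) f x) (at x)"
  moreover from this have "continuous_on UNIV ((deriv ^^ k) f)" for k
    by (blast intro: continuous_on_if_has_derivative)
  ultimately show "Cinf f" by (simp add: Cinf_def Ck_def)
qed (auto simp: Cinf_def Ck_def)

lemma Cinf_imp_continuous: "Cinf f \<Longrightarrow> continuous_on UNIV f"
  unfolding Cinf_def Ck_def by (metis funpow_0)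

lemma Cinf_if_derivative_chain:
  assumes "g 0 = f" and "\<And>j x. (g j has_real_derivative g (Suc j) x) (at x)"
  shows "Cinf f"
proof -
  have derivs: "(deriv ^^ j) f = g j" for j
    by (induction j) (use assms in \<open>auto intro!: ext DERIV_imp_deriv\<close>)
  show ?thesis
    unfolding Cinf_iff_has_derivs derivs using assms(2) by blast
qed

lemma Cinf_compose_affine:
  assumes "Cinf f"
  shows "Cinf (\<lambda>x. f (a * x + b))"
proof (rule Cinf_if_derivative_chain[where g = "\<lambda>j x. a ^ j * (deriv ^^ j) f (a * x + b)"])
  fix j x
  have "((deriv ^^ j) f has_real_derivative (deriv ^^ Suc j) f (a * x + b)) (at (a * x + b))"
    using assms by (simp add: Cinf_iff_has_derivs)
  moreover have "((\<lambda>x. a * x + b) has_real_derivative a) (at x)"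
    by (auto intro!: derivative_eq_intros)
  ultimately have "((\<lambda>x. (deriv ^^ j) f (a * x + b)) has_real_derivative
      (deriv ^^ Suc j) f (a * x + b) * a) (at x)"
    by (rule DERIV_chain2)
  then show "((\<lambda>x. a ^ j * (deriv ^^ j) f (a * x + b)) has_real_derivative
          a ^ Suc j * (deriv ^^ Suc j) f (a * x + b)) (at x)"
    by (auto dest: DERIV_cmult[where c = "a ^ j"] simp: algebra_simps)
qed simp

lemma Cinf_diff:
  assumes "Cinf f" and "Cinf g"
  shows "Cinf (\<lambda>x. f x - g x)"
proof (rule Cinf_if_derivative_chain[where g = "\<lambda>j x. (deriv ^^ j) f x - (deriv ^^ j) g x"])
  fix j x
  show "((\<lambda>x. (deriv ^^ j) f x - (deriv ^^ j) g x) has_real_derivative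
          (deriv ^^ Suc j) f x - (deriv ^^ Suc j) g x) (at x)"
    using assms by (intro DERIV_diff) (auto simp: Cinf_iff_has_derivs)
qed simp

lemma Cinf_add_const:
  assumes "Cinf f"
  shows "Cinf (\<lambda>x. f x + c)"
proof (rule Cinf_if_derivative_chain[where g = "\<lambda>j x. (deriv ^^ j) f x + (if j = 0 then c else 0)"])
  fix j x
  have "((deriv ^^ j) f has_real_derivative (deriv ^^ Suc j) f x) (at x)"
    using assms by (simp add: Cinf_iff_has_derivs)
  then show "((\<lambda>x. (deriv ^^ j) f x + (if j = 0 then c else 0)) has_real_derivative
          (deriv ^^ Suc j) f x + (if Suc j = 0 then c else 0)) (at x)"
    by (auto intro!: derivative_eq_intros)
qed simp

lemma Cinf_if_locally_Cinf:
  assumes "\<And>x0. \<exists>U h. open U \<and> x0 \<in> U \<and> Cinf h \<and> (\<forall>x\<in>U. f x = h x)"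
  shows "Cinf f"
  unfolding Cinf_iff_has_derivs
proof (intro allI)
  fix j x0
  obtain U h where U: "open U" "x0 \<in> U" and "Cinf h" and eq: "\<forall>x\<in>U. f x = h x"
    using assms by blast
  have derivs_eq: "\<forall>x\<in>U. (deriv ^^ i) f x = (deriv ^^ i) h x" for i
  proof (induction i)
    case (Suc i)
    show ?case
    proof
      fix x assume "x \<in> U"
      with Suc U(1) have "eventually (\<lambda>y. (deriv ^^ i) f y = (deriv ^^ i) h y) (nhds x)"
        by (auto elim!: eventually_mono[OF eventually_nhds_in_open])
      then show "(deriv ^^ Suc i) f x = (deriv ^^ Suc i) h x"
        by (simp add: deriv_cong_ev)
    qed
  qed (use eq in simp)
  have "((deriv ^^ j) h has_real_derivative (deriv ^^ Suc j) h x0) (at x0)"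
    using \<open>Cinf h\<close> by (simp add: Cinf_iff_has_derivs)
  then have "((deriv ^^ j) f has_real_derivative (deriv ^^ Suc j) h x0) (at x0)"
    by (rule has_field_derivative_transform_within_open[OF _ U]) (use derivs_eq in auto)
  then show "((deriv ^^ j) f has_real_derivative (deriv ^^ Suc j) f x0) (at x0)"
    using derivs_eq U(2) by metis
qed

section \<open>Periodic functions\<close>

lemma periodic2pi_deriv:
  assumes "periodic2pi f"
  shows "periodic2pi (deriv f)"
  unfolding periodic2pi_def
proof
  fix x
  have "(\<lambda>x. f (x + 2 * pi)) = f"
    using assms by (simp add: periodic2pi_def)
  then have "(f has_field_derivative D) (at (x + 2 * pi)) \<longleftrightarrow> (f has_field_derivative D) (at x)" for D
    by (subst DERIV_shift) simp
  then show "deriv f (x + 2 * pi) = deriv f x"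
    by (simp add: deriv_def)
qed

lemma periodic2pi_funpow_deriv: "periodic2pi f \<Longrightarrow> periodic2pi ((deriv ^^ j) f)"
  by (induction j) (auto intro: periodic2pi_deriv)

lemma periodic2pi_shift_int:
  assumes "periodic2pi f"
  shows "f (x + 2 * pi * of_int k) = f x"
proof (induction k arbitrary: x rule: int_induct[where k = 0])
  case (step1 k)
  have "f (x + 2 * pi * of_int (k + 1)) = f ((x + 2 * pi * of_int k) + 2 * pi)"
    by (simp add: algebra_simps)
  then show ?case
    using assms step1 by (simp add: periodic2pi_def)
next
  case (step2 k)
  have "f (x + 2 * pi * of_int k) = f ((x + 2 * pi * of_int (k - 1)) + 2 * pi)"
    by (simp add: algebra_simps)
  then show ?case
    using assms step2 by (simp add: periodic2pi_def)
qed simp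

definition reduce2pi :: "real \<Rightarrow> real \<Rightarrow> real" where
  "reduce2pi a x = x - 2 * pi * of_int \<lfloor>(x - a) / (2 * pi)\<rfloor>"

lemma reduce2pi_bounds: "a \<le> reduce2pi a x" "reduce2pi a x < a + 2 * pi"
proof -
  let ?k = "of_int \<lfloor>(x - a) / (2 * pi)\<rfloor> :: real"
  have "?k \<le> (x - a) / (2 * pi)" "(x - a) / (2 * pi) < ?k + 1"
    by linarith+
  moreover have "(x - a) / (2 * pi) * (2 * pi) = x - a"
    by simp
  ultimately have "?k * (2 * pi) \<le> x - a" "x - a < (?k + 1) * (2 * pi)"
    using mult_right_mono[of ?k "(x - a) / (2 * pi)" "2 * pi"]
      mult_strict_right_mono[of "(x - a) / (2 * pi)" "?k + 1" "2 * pi"] by simp_all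
  then show "a \<le> reduce2pi a x" "reduce2pi a x < a + 2 * pi"
    by (simp_all add: reduce2pi_def algebra_simps)
qed

lemma reduce2pi_id: "a \<le> x \<Longrightarrow> x < a + 2 * pi \<Longrightarrow> reduce2pi a x = x"
  by (simp add: reduce2pi_def floor_eq_iff field_simps)

lemma reduce2pi_add_2pi: "reduce2pi a (x + 2 * pi) = reduce2pi a x"
proof -
  have "(x + 2 * pi - a) / (2 * pi) = (x - a) / (2 * pi) + 1"
    by (simp add: field_simps)
  then show ?thesis
    by (simp add: reduce2pi_def algebra_simps)
qed

lemma periodic2pi_apply_reduce2pi: "periodic2pi f \<Longrightarrow> f (reduce2pi a x) = f x"
  using periodic2pi_shift_int[of f x "- \<lfloor>(x - a) / (2 * pi)\<rfloor>"] by (simp add: reduce2pi_def)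

definition periodic_ext :: "real \<Rightarrow> (real \<Rightarrow> real) \<Rightarrow> real \<Rightarrow> real" where
  "periodic_ext a w x = w (reduce2pi a x)"

lemma periodic2pi_periodic_ext: "periodic2pi (periodic_ext a w)"
  by (simp add: periodic2pi_def periodic_ext_def reduce2pi_add_2pi)

lemma periodic_ext_eq: "a \<le> x \<Longrightarrow> x < a + 2 * pi \<Longrightarrow> periodic_ext a w x = w x"
  by (simp add: periodic_ext_def reduce2pi_id)

lemma periodic_ext_eq_shift:
  assumes "w a = w (a + 2 * pi)" and "a \<le> x - 2 * pi * of_int k" "x - 2 * pi * of_int k \<le> a + 2 * pi"
  shows "periodic_ext a w x = w (x - 2 * pi * of_int k)"
proof -
  have "periodic_ext a w x = periodic_ext a w (x - 2 * pi * of_int k)"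
    using periodic2pi_shift_int[OF periodic2pi_periodic_ext, where x = "x - 2 * pi * of_int k" and k = k] by simp
  also have "\<dots> = w (x - 2 * pi * of_int k)"
  proof (cases "x - 2 * pi * of_int k < a + 2 * pi")
    case False
    then have "x - 2 * pi * of_int k = a + 2 * pi"
      using assms(3) by simp
    then show ?thesis
      using periodic2pi_periodic_ext[of a w] periodic_ext_eq[of a a w] assms(1)
      by (simp add: periodic2pi_def)
  qed (use assms periodic_ext_eq in auto)
  finally show ?thesis .
qed

lemma continuous_on_periodic_ext:
  assumes cont: "continuous_on UNIV w" and ends: "w a = w (a + 2 * pi)"
  shows "continuous_on UNIV (periodic_ext a w)"
proof -
  define I where "I j = {a + 2 * pi * of_int j .. a + 2 * pi * of_int j + 2 * pi}" for j :: int
  have cont_I: "continuous_on (I j) (periodic_ext a w)" for j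
  proof (rule continuous_on_eq)
    show "continuous_on (I j) (\<lambda>x. w (x - 2 * pi * of_int j))"
      by (intro continuous_on_compose2[OF cont] continuous_intros) auto
  next
    fix x assume "x \<in> I j"
    then show "w (x - 2 * pi * of_int j) = periodic_ext a w x"
      using periodic_ext_eq_shift[OF ends, of x j] by (simp add: I_def)
  qed
  have "isCont (periodic_ext a w) x0" for x0
  proof -
    define k where "k = \<lfloor>(x0 - a) / (2 * pi)\<rfloor>"
    have "a \<le> x0 - 2 * pi * of_int k" "x0 - 2 * pi * of_int k < a + 2 * pi"
      using reduce2pi_bounds[of a x0] by (simp_all add: reduce2pi_def k_def)
    then have "x0 \<in> interior (I (k - 1) \<union> I k)"
      by (simp add: I_def algebra_simps ivl_disj_un_two_touch)
    moreover have "continuous_on (I (k - 1) \<union> I k) (periodic_ext a w)"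
      by (intro continuous_on_closed_Un cont_I) (auto simp: I_def)
    ultimately show ?thesis
      using continuous_on_interior by blast
  qed
  then show ?thesis
    by (simp add: continuous_at_imp_continuous_on)
qed

lemma Cinf_periodic2pi_if_eq_Cinf:
  assumes "periodic2pi f" and "Cinf h" and "a + 2 * pi < b" and eq: "\<forall>x\<in>{a<..<b}. f x = h x"
  shows "Cinf f"
proof (rule Cinf_if_locally_Cinf)
  fix x0
  define c where "c = (a + b) / 2 - pi"
  define k where "k = \<lfloor>(x0 - c) / (2 * pi)\<rfloor>"
  define U where "U = {x. a < x - 2 * pi * of_int k \<and> x - 2 * pi * of_int k < b}"
  have "2 * c = a + b - 2 * pi"
    by (simp add: c_def)
  then have "a < reduce2pi c x0" "reduce2pi c x0 < b"
    using reduce2pi_bounds[of c x0] assms(3) by linarith+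
  then have "x0 \<in> U"
    by (simp add: U_def reduce2pi_def k_def)
  moreover have "open U"
    unfolding U_def by (intro open_Collect_conj open_Collect_less continuous_intros)
  moreover have "Cinf (\<lambda>x. h (1 * x + - 2 * pi * of_int k))"
    using Cinf_compose_affine[OF assms(2)] .
  moreover have "\<forall>x\<in>U. f x = h (1 * x + - 2 * pi * of_int k)"
  proof
    fix x assume "x \<in> U"
    then have "f (x - 2 * pi * of_int k) = h (x - 2 * pi * of_int k)"
      using eq by (simp add: U_def)
    then show "f x = h (1 * x + - 2 * pi * of_int k)"
      using periodic2pi_shift_int[OF assms(1), of x "- k"] by simp
  qed
  ultimately show "\<exists>U h. open U \<and> x0 \<in> U \<and> Cinf h \<and> (\<forall>x\<in>U. f x = h x)"
    by blast
qed

section \<open>Mean-zero primitives\<close>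

lemma integral_eq_antiderivative_diff:
  assumes "\<And>x. (F has_real_derivative f x) (at x)" and "a \<le> b"
  shows "integral {a..b} f = F b - F a"
  by (intro integral_unique fundamental_theorem_of_calculus assms(2))
    (auto simp: has_real_derivative_iff_has_vector_derivative[symmetric]
      intro: has_field_derivative_at_within assms(1))

lemma antiderivative_diff_eq_const:
  assumes "\<And>x. (F has_real_derivative f x) (at x)" and "a \<le> b" and "\<And>x. x \<in> {a..b} \<Longrightarrow> f x = c"
  shows "F b - F a = c * (b - a)"
proof -
  have "F b - F a = integral {a..b} (\<lambda>_. c)"
    using integral_eq_antiderivative_diff[OF assms(1,2)] integral_cong[of "{a..b}" f "\<lambda>_. c"] assms(3)
    by simp
  then show ?thesis
    using assms(2) by simp
qed

lemma integral_deriv_periodic2pi: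
  assumes "periodic2pi F" and "\<And>x. (F has_real_derivative f x) (at x)"
  shows "integral {-pi..pi} f = 0"
proof -
  have "F pi = F (-pi)"
    using assms(1)[unfolded periodic2pi_def, rule_format, of "-pi"] by simp
  then show ?thesis
    using integral_eq_antiderivative_diff[OF assms(2), of "-pi" pi] by simp
qed

lemma antiderivative_add_2pi:
  assumes "periodic2pi f" and F: "\<And>x. (F has_real_derivative f x) (at x)"
  shows "F (x + 2 * pi) - F x = integral {-pi..pi} f"
proof -
  have "((\<lambda>t. F (t + 2 * pi) - F t) has_real_derivative 0) (at y)" for y
  proof -
    have "((\<lambda>t. F (t + 2 * pi)) has_real_derivative f (y + 2 * pi)) (at y)"
      using F[of "y + 2 * pi"] DERIV_shift by blast
    from DERIV_diff[OF this F[of y]] show ?thesis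
      using assms(1) by (simp add: periodic2pi_def)
  qed
  then have "F (x + 2 * pi) - F x = F (-pi + 2 * pi) - F (-pi)"
    using DERIV_isconst_all[of "\<lambda>t. F (t + 2 * pi) - F t"] by blast
  also have "\<dots> = integral {-pi..pi} f"
    using integral_eq_antiderivative_diff[OF F, of "-pi" pi] by simp
  finally show ?thesis .
qed

lemma periodic2pi_antiderivative:
  assumes "periodic2pi f" and "\<And>x. (F has_real_derivative f x) (at x)"
    and "integral {-pi..pi} f = 0"
  shows "periodic2pi F"
  using antiderivative_add_2pi[OF assms(1,2)] assms(3) by (simp add: periodic2pi_def)

definition integral0 :: "(real \<Rightarrow> real) \<Rightarrow> real \<Rightarrow> real" where
  "integral0 g x = (if 0 \<le> x then integral {0..x} g else - integral {x..0} g)"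

lemma integral0_eq_diff:
  assumes g: "continuous_on UNIV g" and "a \<le> x" "a \<le> 0"
  shows "integral0 g x = integral {a..x} g - integral {a..0} g"
proof -
  have "g integrable_on {a..max x 0}"
    by (rule integrable_continuous_interval[OF continuous_on_subset[OF g]]) simp
  then show ?thesis
    unfolding integral0_def using assms(2,3)
    by (cases "0 \<le> x")
      (simp_all add: Henstock_Kurzweil_Integration.integral_combine[symmetric, of a 0 x]
        Henstock_Kurzweil_Integration.integral_combine[symmetric, of a x 0] max_def)
qed

lemma integral0_has_derivative:
  assumes g: "continuous_on UNIV g"
  shows "(integral0 g has_real_derivative g x) (at x)"
proof -
  define a where "a = min x 0 - 1"
  define b where "b = max x 0 + 1"
  have "((\<lambda>y. integral {a..y} g) has_real_derivative g x) (at x within {a..b})"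
    by (rule integral_has_real_derivative) (use continuous_on_subset[OF g] a_def b_def in auto)
  moreover have "at x within {a..b} = at x"
    by (rule at_within_Icc_at) (auto simp: a_def b_def)
  ultimately have "((\<lambda>y. integral {a..y} g - integral {a..0} g) has_real_derivative g x) (at x)"
    using DERIV_diff[where g = "\<lambda>y. integral {a..0} g" and E = 0] by auto
  then show ?thesis
    by (rule has_field_derivative_transform_within_open[where S = "{a<..<b}"])
      (use integral0_eq_diff[OF g, of a] a_def b_def in auto)
qed

lemma integral_period_shift:
  assumes "continuous_on UNIV g" and "periodic2pi g"
  shows "integral {a..a + 2 * pi} g = integral {-pi..pi} g"
  using integral_eq_antiderivative_diff[OF integral0_has_derivative[OF assms(1)], of a "a + 2 * pi"]
    antiderivative_add_2pi[OF assms(2) integral0_has_derivative[OF assms(1)]]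
  by simp

lemma integral_minus_const:
  assumes "continuous_on UNIV f"
  shows "integral {-pi..pi} (\<lambda>x. f x - c) = integral {-pi..pi} f - 2 * pi * c"
proof -
  have "f integrable_on {-pi..pi}"
    by (rule integrable_continuous_interval[OF continuous_on_subset[OF assms]]) simp
  then have "integral {-pi..pi} (\<lambda>x. f x - c) = integral {-pi..pi} f - integral {-pi..pi} (\<lambda>x. c)"
    by (intro integral_diff) auto
  then show ?thesis
    by simp
qed

definition centered :: "(real \<Rightarrow> real) \<Rightarrow> real \<Rightarrow> real" where
  "centered g x = g x - integral {-pi..pi} g / (2 * pi)"

definition mean_zero_periodic :: "(real \<Rightarrow> real) \<Rightarrow> bool" where
  "mean_zero_periodic g \<longleftrightarrow> continuous_on UNIV g \<and> periodic2pi g \<and> integral {-pi..pi} g = 0"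

lemma centered_has_derivative:
  "(g has_real_derivative D) (at x) \<Longrightarrow> (centered g has_real_derivative D) (at x)"
  unfolding centered_def[abs_def] by (auto intro!: derivative_eq_intros)

lemma mean_zero_periodic_centered:
  assumes "continuous_on UNIV g" and "periodic2pi g"
  shows "mean_zero_periodic (centered g)"
  using assms unfolding mean_zero_periodic_def centered_def[abs_def] periodic2pi_def
  by (auto intro!: continuous_intros simp: integral_minus_const)

definition primitive :: "(real \<Rightarrow> real) \<Rightarrow> real \<Rightarrow> real" where
  "primitive g = centered (integral0 g)"

lemma primitive_has_derivative:
  "continuous_on UNIV g \<Longrightarrow> (primitive g has_real_derivative g x) (at x)"
  unfolding primitive_def by (intro centered_has_derivative integral0_has_derivative)

lemma mean_zero_periodic_primitive:
  assumes "mean_zero_periodic g"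
  shows "mean_zero_periodic (primitive g)"
proof -
  have g: "continuous_on UNIV g" "periodic2pi g" "integral {-pi..pi} g = 0"
    using assms by (simp_all add: mean_zero_periodic_def)
  have "continuous_on UNIV (integral0 g)"
    by (rule continuous_on_if_has_derivative[OF integral0_has_derivative[OF g(1)]])
  moreover have "periodic2pi (integral0 g)"
    by (rule periodic2pi_antiderivative[OF g(2) integral0_has_derivative[OF g(1)] g(3)])
  ultimately show ?thesis
    unfolding primitive_def by (rule mean_zero_periodic_centered)
qed

lemma mean_zero_periodic_diff:
  assumes "mean_zero_periodic g" and "mean_zero_periodic h"
  shows "mean_zero_periodic (\<lambda>x. g x - h x)"
proof -
  have "g integrable_on {-pi..pi}" "h integrable_on {-pi..pi}"
    using assms by (auto simp: mean_zero_periodic_def intro!: integrable_continuous_interval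
        intro: continuous_on_subset)
  then have "integral {-pi..pi} (\<lambda>x. g x - h x) = integral {-pi..pi} g - integral {-pi..pi} h"
    by (rule integral_diff)
  then show ?thesis
    using assms by (simp add: mean_zero_periodic_def periodic2pi_def continuous_on_diff)
qed

lemma mean_zero_periodic_funpow_primitive:
  "mean_zero_periodic g \<Longrightarrow> mean_zero_periodic ((primitive ^^ n) g)"
  by (induction n) (auto intro: mean_zero_periodic_primitive)

lemma funpow_primitive_has_derivative:
  "mean_zero_periodic g \<Longrightarrow>
    ((primitive ^^ Suc n) g has_real_derivative (primitive ^^ n) g x) (at x)"
  using primitive_has_derivative[of "(primitive ^^ n) g"] mean_zero_periodic_funpow_primitive[of g n]
  by (simp add: mean_zero_periodic_def)

lemma funpow_deriv_funpow_primitive: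
  assumes "mean_zero_periodic g" and "j \<le> n"
  shows "(deriv ^^ j) ((primitive ^^ n) g) = (primitive ^^ (n - j)) g"
  using assms(2)
proof (induction j)
  case (Suc j)
  then have "n - j = Suc (n - Suc j)"
    by simp
  with Suc have "(deriv ^^ Suc j) ((primitive ^^ n) g) = deriv ((primitive ^^ Suc (n - Suc j)) g)"
    by (simp only: funpow.simps(2) o_apply Suc_leD)
  also have "\<dots> = (primitive ^^ (n - Suc j)) g"
    by (intro ext DERIV_imp_deriv funpow_primitive_has_derivative assms(1))
  finally show ?case .
qed simp

lemma Ck_funpow_primitive:
  assumes "mean_zero_periodic g"
  shows "Ck n ((primitive ^^ n) g)"
  unfolding Ck_def
proof (intro conjI allI impI)
  fix j x assume "j < n"
  then have "(deriv ^^ j) ((primitive ^^ n) g) = (primitive ^^ Suc (n - Suc j)) g"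
    using funpow_deriv_funpow_primitive[OF assms, of j n] by (simp add: Suc_diff_Suc del: funpow.simps)
  moreover have "(deriv ^^ Suc j) ((primitive ^^ n) g) = (primitive ^^ (n - Suc j)) g"
    using funpow_deriv_funpow_primitive[OF assms, of "Suc j" n] \<open>j < n\<close> by (simp del: funpow.simps)
  ultimately show "((deriv ^^ j) ((primitive ^^ n) g) has_real_derivative
      (deriv ^^ Suc j) ((primitive ^^ n) g) x) (at x)"
    using funpow_primitive_has_derivative[OF assms, of "n - Suc j"] by (simp del: funpow.simps)
next
  show "continuous_on UNIV ((deriv ^^ n) ((primitive ^^ n) g))"
    using assms by (simp add: funpow_deriv_funpow_primitive mean_zero_periodic_def)
qed

lemma Cinf_funpow_primitive:
  assumes "mean_zero_periodic g" and "Cinf g"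
  shows "Cinf ((primitive ^^ n) g)"
proof (rule Cinf_if_derivative_chain[where
      g = "\<lambda>j. if j \<le> n then (primitive ^^ (n - j)) g else (deriv ^^ (j - n)) g"])
  fix j x
  consider "j < n" | "j = n" | "j > n"
    by linarith
  then show "((if j \<le> n then (primitive ^^ (n - j)) g else (deriv ^^ (j - n)) g) has_real_derivative
      (if Suc j \<le> n then (primitive ^^ (n - Suc j)) g else (deriv ^^ (Suc j - n)) g) x) (at x)"
  proof cases
    case 1
    then have "n - j = Suc (n - Suc j)"
      by simp
    with 1 show ?thesis
      using funpow_primitive_has_derivative[OF assms(1)] by simp
  next
    case 2
    have "((deriv ^^ 0) g has_real_derivative (deriv ^^ Suc 0) g x) (at x)"
      using assms(2) unfolding Cinf_iff_has_derivs by blast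
    with 2 show ?thesis
      by simp
  next
    case 3
    then have "Suc j - n = Suc (j - n)"
      by simp
    with 3 show ?thesis
      using assms(2) by (simp add: Cinf_iff_has_derivs)
  qed
qed simp

lemma eq_if_same_derivative_mean_zero:
  assumes "\<And>x. (F has_real_derivative f x) (at x)" and "\<And>x. (G has_real_derivative f x) (at x)"
    and "integral {-pi..pi} F = 0" and "integral {-pi..pi} G = 0"
  shows "F = G"
proof -
  have "((\<lambda>x. F x - G x) has_real_derivative 0) (at x)" for x
    using DERIV_diff[OF assms(1,2)] by simp
  then have const: "F x - G x = F 0 - G 0" for x
    using DERIV_isconst_all by blast
  define c where "c = G 0 - F 0"
  have F: "F = (\<lambda>x. G x - c)"
    using const by (auto simp: c_def algebra_simps)
  then have "integral {-pi..pi} F = integral {-pi..pi} G - 2 * pi * c"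
    using integral_minus_const[OF continuous_on_if_has_derivative[OF assms(2)]] by simp
  then have "c = 0"
    using assms(3,4) by simp
  then show ?thesis
    using F by simp
qed

lemma mean_zero_periodic_funpow_deriv:
  assumes f: "Ck n f" "periodic2pi f" "integral {-pi..pi} f = 0" and "j \<le> n"
  shows "mean_zero_periodic ((deriv ^^ j) f)"
proof -
  have chain: "((deriv ^^ i) f has_real_derivative (deriv ^^ Suc i) f x) (at x)" if "i < n" for i x
    using f(1) that by (simp add: Ck_def)
  have "continuous_on UNIV ((deriv ^^ j) f)"
  proof (cases "j = n")
    case False
    with \<open>j \<le> n\<close> show ?thesis
      by (intro continuous_on_if_has_derivative[OF chain]) simp
  qed (use f(1) Ck_def in auto)
  moreover have "integral {-pi..pi} ((deriv ^^ j) f) = 0"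
  proof (cases j)
    case (Suc i)
    with \<open>j \<le> n\<close> show ?thesis
      using integral_deriv_periodic2pi[OF periodic2pi_funpow_deriv[OF f(2)] chain] by simp
  qed (use f(3) in simp)
  ultimately show ?thesis
    using periodic2pi_funpow_deriv[OF f(2)] by (simp add: mean_zero_periodic_def)
qed

lemma funpow_primitive_funpow_deriv:
  assumes f: "Ck n f" "periodic2pi f" "integral {-pi..pi} f = 0"
  shows "(primitive ^^ n) ((deriv ^^ n) f) = f"
proof -
  have "(primitive ^^ j) ((deriv ^^ j) f) = f" if "j \<le> n" for j
    using that
  proof (induction j)
    case (Suc j)
    have mz: "mean_zero_periodic ((deriv ^^ i) f)" if "i \<le> n" for i
      using mean_zero_periodic_funpow_deriv[OF f that] .
    have "(deriv ^^ j) f = primitive ((deriv ^^ Suc j) f)"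
    proof (rule eq_if_same_derivative_mean_zero)
      show "((deriv ^^ j) f has_real_derivative (deriv ^^ Suc j) f x) (at x)" for x
        using f(1) Suc.prems by (simp add: Ck_def)
      show "(primitive ((deriv ^^ Suc j) f) has_real_derivative (deriv ^^ Suc j) f x) (at x)" for x
        using mz[OF Suc.prems] by (intro primitive_has_derivative) (simp add: mean_zero_periodic_def)
      show "integral {-pi..pi} ((deriv ^^ j) f) = 0"
        using mz Suc.prems by (simp add: mean_zero_periodic_def)
      show "integral {-pi..pi} (primitive ((deriv ^^ Suc j) f)) = 0"
        using mean_zero_periodic_primitive[OF mz[OF Suc.prems]] by (simp add: mean_zero_periodic_def)
    qed
    then show ?case
      using Suc by (simp add: funpow_Suc_right del: funpow.simps)
  qed simp
  then show ?thesis
    by simp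
qed

section \<open>Sup-norm estimates\<close>

lemma abs_diff_le_of_deriv_bound:
  assumes "a \<le> b" and "continuous_on {a..b} f"
    and "\<And>x. a < x \<Longrightarrow> x < b \<Longrightarrow> (f has_real_derivative f' x) (at x)"
    and "\<And>x. a < x \<Longrightarrow> x < b \<Longrightarrow> \<bar>f' x\<bar> \<le> M"
  shows "\<bar>f b - f a\<bar> \<le> M * (b - a)"
proof (cases "a = b")
  case False
  then have "a < b"
    using assms(1) by simp
  moreover have "f differentiable at x" if "a < x" "x < b" for x
    using assms(3)[OF that] real_differentiable_def by blast
  ultimately obtain l z where z: "a < z" "z < b" "(f has_real_derivative l) (at z)"
    and mvt: "f b - f a = (b - a) * l"
    using MVT[OF _ assms(2)] by blast
  have "\<bar>l\<bar> \<le> M"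
    using DERIV_unique[OF z(3) assms(3)[OF z(1,2)]] assms(4)[OF z(1,2)] by simp
  then show ?thesis
    using mvt \<open>a < b\<close> by (simp add: abs_mult mult.commute mult_left_mono)
qed simp

lemma exists_root_of_integral_eq_0:
  fixes g :: "real \<Rightarrow> real"
  assumes cont: "continuous_on {a..b} g" and "a < b" and "integral {a..b} g = 0"
  shows "\<exists>z\<in>{a..b}. g z = 0"
proof (rule ccontr)
  assume no_root: "\<not> (\<exists>z\<in>{a..b}. g z = 0)"
  have conn: "connected (g ` {a..b})"
    by (intro connected_continuous_image cont) simp
  have nonempty: "{a<..<b} \<noteq> {}"
    using \<open>a < b\<close> by simp
  have "(\<forall>x\<in>{a..b}. 0 < g x) \<or> (\<forall>x\<in>{a..b}. g x < 0)"
  proof (rule ccontr)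
    assume "\<not> ?thesis"
    then obtain x y where x: "x \<in> {a..b}" "\<not> 0 < g x" and y: "y \<in> {a..b}" "\<not> g y < 0"
      by blast
    have "0 \<in> g ` {a..b}"
      by (rule connectedD_interval[OF conn, of "g x" "g y"]) (use x y in auto)
    then show False
      using no_root by auto
  qed
  then show False
  proof
    assume "\<forall>x\<in>{a..b}. 0 < g x"
    then have "integral {a..b} (\<lambda>_. 0) < integral {a..b} g"
      by (intro integral_less_real[OF _ cont nonempty]) auto
    then show False
      using assms(3) by simp
  next
    assume "\<forall>x\<in>{a..b}. g x < 0"
    then have "integral {a..b} g < integral {a..b} (\<lambda>_. 0)"
      by (intro integral_less_real[OF cont _ nonempty]) auto
    then show False
      using assms(3) by simp
  qed
qed

lemma abs_le_of_oscillation_le: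
  assumes "mean_zero_periodic g" and "\<And>x y. \<bar>g x - g y\<bar> \<le> M"
  shows "\<bar>g x\<bar> \<le> M"
proof -
  obtain z where "g z = 0"
    using exists_root_of_integral_eq_0[of "-pi" pi g] assms(1)
    by (auto simp: mean_zero_periodic_def intro: continuous_on_subset)
  then show ?thesis
    using assms(2)[of x z] by simp
qed

lemma periodic2pi_oscillation_le:
  assumes "periodic2pi f" and "\<And>x. (f has_real_derivative f' x) (at x)" and "\<And>x. \<bar>f' x\<bar> \<le> M"
  shows "\<bar>f x - f y\<bar> \<le> pi * M"
proof -
  define x' where "x' = reduce2pi (y - pi) x"
  have x': "y - pi \<le> x'" "x' < y + pi"
    using reduce2pi_bounds[of "y - pi" x] by (simp_all add: x'_def)
  have cont: "continuous_on {u..v} f" for u v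
    using continuous_on_if_has_derivative[OF assms(2)] by (rule continuous_on_subset) simp
  have "\<bar>f (max x' y) - f (min x' y)\<bar> \<le> M * (max x' y - min x' y)"
    by (rule abs_diff_le_of_deriv_bound[OF _ cont assms(2,3)]) simp
  also have "\<dots> \<le> M * pi"
    using x' assms(3)[of 0] by (intro mult_left_mono) auto
  finally have "\<bar>f x' - f y\<bar> \<le> pi * M"
    by (cases "x' \<le> y") (simp_all add: max_def min_def abs_minus_commute mult.commute)
  then show ?thesis
    using periodic2pi_apply_reduce2pi[OF assms(1)] by (simp add: x'_def)
qed

lemma abs_primitive_diff_le:
  assumes g1: "mean_zero_periodic g1" and g2: "mean_zero_periodic g2"
    and bound: "\<And>x. \<bar>g1 x - g2 x\<bar> \<le> M"
  shows "\<bar>primitive g1 x - primitive g2 x\<bar> \<le> pi * M"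
proof (rule abs_le_of_oscillation_le[where g = "\<lambda>x. primitive g1 x - primitive g2 x"])
  show mz: "mean_zero_periodic (\<lambda>x. primitive g1 x - primitive g2 x)"
    using g1 g2 by (intro mean_zero_periodic_diff mean_zero_periodic_primitive)
  show "\<bar>(primitive g1 x - primitive g2 x) - (primitive g1 y - primitive g2 y)\<bar> \<le> pi * M" for x y
  proof (rule periodic2pi_oscillation_le[where f = "\<lambda>x. primitive g1 x - primitive g2 x"])
    show "((\<lambda>x. primitive g1 x - primitive g2 x) has_real_derivative g1 x - g2 x) (at x)" for x
      using g1 g2 by (intro DERIV_diff primitive_has_derivative) (simp_all add: mean_zero_periodic_def)
  qed (use bound mz in \<open>simp_all add: mean_zero_periodic_def\<close>)
qed

lemma abs_funpow_primitive_diff_le: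
  assumes "mean_zero_periodic g1" and "mean_zero_periodic g2" and "\<And>x. \<bar>g1 x - g2 x\<bar> \<le> M"
  shows "\<bar>(primitive ^^ n) g1 x - (primitive ^^ n) g2 x\<bar> \<le> pi ^ n * M"
proof (induction n arbitrary: x)
  case (Suc n)
  have "\<bar>primitive ((primitive ^^ n) g1) x - primitive ((primitive ^^ n) g2) x\<bar> \<le> pi * (pi ^ n * M)"
    using assms(1,2) Suc.IH by (intro abs_primitive_diff_le mean_zero_periodic_funpow_primitive)
  then show ?case
    by (simp add: mult.assoc)
qed (use assms(3) in simp)

section \<open>The perfect spline \<open>E\<^sub>r\<^sub>,\<^sub>d\<close>\<close>

lemma periodic2pi_const_if_deriv_zero:
  assumes "periodic2pi D" and cont: "continuous_on UNIV D" and "a < c" "c < a + 2 * pi"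
    and D': "\<And>x. x \<in> {a<..<a + 2 * pi} - {c} \<Longrightarrow> (D has_real_derivative 0) (at x)"
  shows "D x = D a"
proof -
  have left: "D y = D a" if "a \<le> y" "y \<le> c" for y
  proof (rule DERIV_isconst2[OF \<open>a < c\<close> continuous_on_subset[OF cont] _ that])
    fix t assume "a < t" "t < c"
    with \<open>c < a + 2 * pi\<close> show "(D has_real_derivative 0) (at t)"
      by (intro D') auto
  qed simp
  have right: "D y = D c" if "c \<le> y" "y \<le> a + 2 * pi" for y
  proof (rule DERIV_isconst2[OF \<open>c < a + 2 * pi\<close> continuous_on_subset[OF cont] _ that])
    fix t assume "c < t" "t < a + 2 * pi"
    with \<open>a < c\<close> show "(D has_real_derivative 0) (at t)"
      by (intro D') auto
  qed simp
  have period: "D y = D a" if "a \<le> y" "y < a + 2 * pi" for y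
  proof (cases "y \<le> c")
    case False
    then have "D y = D c"
      using that by (intro right) auto
    also have "\<dots> = D a"
      using \<open>a < c\<close> by (intro left) auto
    finally show ?thesis .
  qed (use that in \<open>intro left\<close>)
  have "D x = D (reduce2pi a x)"
    using periodic2pi_apply_reduce2pi[OF assms(1)] by simp
  also have "\<dots> = D a"
    using period reduce2pi_bounds by blast
  finally show ?thesis .
qed

lemma mean_zero_periodic_eqI:
  assumes g: "mean_zero_periodic g" and h: "mean_zero_periodic h" and "a < c" "c < a + 2 * pi"
    and "\<And>x. x \<in> {a<..<a + 2 * pi} - {c} \<Longrightarrow> ((\<lambda>x. g x - h x) has_real_derivative 0) (at x)"
  shows "g = h"
proof -
  have "continuous_on UNIV (\<lambda>x. g x - h x)"
    using g h by (auto simp: mean_zero_periodic_def intro!: continuous_intros)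
  moreover have "periodic2pi (\<lambda>x. g x - h x)"
    using g h by (simp add: mean_zero_periodic_def periodic2pi_def)
  ultimately have const: "g x - h x = g a - h a" for x
    using periodic2pi_const_if_deriv_zero[of "\<lambda>x. g x - h x"] assms(3-5) by blast
  define C where "C = h a - g a"
  have "g = (\<lambda>x. h x - C)"
    using const by (auto simp: C_def algebra_simps)
  then have "integral {-pi..pi} g = integral {-pi..pi} h - 2 * pi * C"
    using h integral_minus_const by (simp add: mean_zero_periodic_def)
  then have "C = 0"
    using g h by (simp add: mean_zero_periodic_def)
  then show ?thesis
    using \<open>g = _\<close> by simp
qed

definition tent :: "real \<Rightarrow> real \<Rightarrow> real" where
  "tent d = centered (periodic_ext (-d) (\<lambda>x. \<bar>x\<bar> - gam d * x))"

lemma mean_zero_periodic_tent: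
  assumes "0 < d" "d \<le> pi"
  shows "mean_zero_periodic (tent d)"
proof -
  have "\<bar>-d\<bar> - gam d * (-d) = \<bar>-d + 2 * pi\<bar> - gam d * (-d + 2 * pi)"
    using assms by (simp add: gam_def field_simps)
  then have "continuous_on UNIV (periodic_ext (-d) (\<lambda>x. \<bar>x\<bar> - gam d * x))"
    by (intro continuous_on_periodic_ext continuous_intros)
  then show ?thesis
    unfolding tent_def by (intro mean_zero_periodic_centered periodic2pi_periodic_ext)
qed

lemma tent_has_derivative:
  assumes x: "x \<in> {-d<..<2 * pi - d} - {0}"
  shows "(tent d has_real_derivative sgn x - gam d) (at x)"
proof -
  define U where "U = {-d<..<2 * pi - d} \<inter> (if 0 < x then {0<..} else {..<0})"
  have U: "open U" "x \<in> U" "U \<subseteq> {-d<..<2 * pi - d}"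
    using x by (auto simp: U_def)
  have "((\<lambda>y. sgn x * y - gam d * y) has_real_derivative sgn x * 1 - gam d * 1) (at x)"
    by (intro derivative_eq_intros) auto
  moreover have "sgn x * y - gam d * y = periodic_ext (-d) (\<lambda>x. \<bar>x\<bar> - gam d * x) y" if "y \<in> U" for y
  proof -
    have "-d \<le> y" "y < -d + 2 * pi"
      using U(3) that by auto
    moreover have "\<bar>y\<bar> = sgn x * y"
      using that x by (auto simp: U_def split: if_splits)
    ultimately show ?thesis
      by (simp add: periodic_ext_eq)
  qed
  ultimately have "(periodic_ext (-d) (\<lambda>x. \<bar>x\<bar> - gam d * x) has_real_derivative sgn x - gam d) (at x)"
    using has_field_derivative_transform_within_open[OF _ U(1,2)] by simp
  then show ?thesis
    unfolding tent_def by (rule centered_has_derivative)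
qed

lemma Erd_eq_funpow_primitive_tent:
  assumes "0 < d" "d \<le> pi"
  shows "Erd r d = (primitive ^^ (r - 1)) (tent d)"
  unfolding Erd_def
proof (rule the_equality)
  let ?m = "r - 1"
  let ?G = "(primitive ^^ ?m) (tent d)"
  have tent: "mean_zero_periodic (tent d)"
    using mean_zero_periodic_tent[OF assms] .
  have "(deriv ^^ ?m) ?G = tent d"
    using funpow_deriv_funpow_primitive[OF tent, of ?m ?m] by simp
  then show "periodic2pi ?G \<and> Ck ?m ?G \<and> integral {-pi..pi} ?G = 0 \<and>
      (\<forall>x\<in>{-d<..<2 * pi - d} - {0}. ((deriv ^^ ?m) ?G has_real_derivative sgn x - gam d) (at x))"
    using mean_zero_periodic_funpow_primitive[OF tent, of ?m] Ck_funpow_primitive[OF tent, of ?m]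
      tent_has_derivative by (simp add: mean_zero_periodic_def)
next
  fix f
  assume f: "periodic2pi f \<and> Ck (r - 1) f \<and> integral {-pi..pi} f = 0 \<and>
      (\<forall>x\<in>{-d<..<2 * pi - d} - {0}. ((deriv ^^ (r - 1)) f has_real_derivative sgn x - gam d) (at x))"
  have "(deriv ^^ (r - 1)) f = tent d"
  proof (rule mean_zero_periodic_eqI[of _ _ "-d" 0])
    show "mean_zero_periodic ((deriv ^^ (r - 1)) f)"
      using f by (intro mean_zero_periodic_funpow_deriv) auto
    show "((\<lambda>x. (deriv ^^ (r - 1)) f x - tent d x) has_real_derivative 0) (at x)"
      if "x \<in> {-d<..<-d + 2 * pi} - {0}" for x
    proof -
      have x: "x \<in> {-d<..<2 * pi - d} - {0}"
        using that by simp
      have "((deriv ^^ (r - 1)) f has_real_derivative sgn x - gam d) (at x)"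
        using f x by blast
      from DERIV_diff[OF this tent_has_derivative[OF x]] show ?thesis
        by simp
    qed
  qed (use assms mean_zero_periodic_tent in auto)
  then show "f = (primitive ^^ (r - 1)) (tent d)"
    using funpow_primitive_funpow_deriv[of "r - 1" f] f by simp
qed

section \<open>The smoothed spline \<open>E\<^sub>r\<^sub>,\<^sub>d\<^sub>,\<^sub>\<lambda>\<close>\<close>

locale smoothed_step =
  fixes S :: "real \<Rightarrow> real" and d lam :: real
  assumes Cinf_S: "Cinf S" and mono_S: "mono S" and S_sgn: "\<And>x. 1 \<le> \<bar>x\<bar> \<Longrightarrow> S x = sgn x"
    and lam_pos: "0 < lam" and lam_le: "3 * lam \<le> d" and d_le_pi: "d \<le> pi"
begin

lemma S_eq_1: "1 \<le> x \<Longrightarrow> S x = 1"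
  using S_sgn[of x] by simp

lemma S_eq_minus_1: "x \<le> -1 \<Longrightarrow> S x = -1"
  using S_sgn[of x] by simp

lemma abs_S_le_1: "\<bar>S x\<bar> \<le> 1"
proof -
  have "S x \<le> S (max x 1)" "S (min x (-1)) \<le> S x"
    using mono_S by (simp_all add: monoD)
  moreover have "S (max x 1) = 1" "S (min x (-1)) = -1"
    by (simp_all add: S_eq_1 S_eq_minus_1)
  ultimately show ?thesis
    by simp
qed

lemma Stilde_eq_sgn:
  assumes "3 * lam \<le> x \<or> (3 * lam - d \<le> x \<and> x < 0)"
  shows "Stilde S lam d x = sgn x"
proof -
  have "1 \<le> (x - 2 * lam) / lam \<or> (x < 0 \<and> 1 \<le> (x - 2 * lam + d) / lam)"
    using assms lam_pos by (auto simp: pos_le_divide_eq)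
  then show ?thesis
    using assms lam_pos by (auto simp: Stilde_def S_eq_1)
qed

text \<open>This smooth function agrees with \<open>S\<^sub>\<lambda>\<^sub>,\<^sub>d\<close> on \<open>[-d, 2\<pi> - d]\<close> and stays equal to
  \<open>1 - \<gamma>\<^sub>d\<close> to the right of \<open>2\<pi> - d\<close>, which is also the value of \<open>S\<^sub>\<lambda>\<^sub>,\<^sub>d\<close> just right of
  \<open>-d\<close>; this is why the periodic extension of \<open>S\<^sub>\<lambda>\<^sub>,\<^sub>d\<close> is smooth.\<close>
definition Sld_smooth :: "real \<Rightarrow> real" where
  "Sld_smooth x = S ((x - 2 * lam) / lam) - S ((x - 2 * lam + d) / lam) + (1 - gam d)"

lemma Sld_smooth_eq_Sld:
  assumes "-d \<le> x" "x \<le> 2 * pi - d"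
  shows "Sld_smooth x = Sld S lam d x"
proof (cases "0 \<le> x")
  case True
  then have "1 \<le> (x - 2 * lam + d) / lam"
    using lam_pos lam_le by (simp add: pos_le_divide_eq)
  with True show ?thesis
    by (simp add: Sld_smooth_def Sld_def Stilde_def S_eq_1)
next
  case False
  then have "(x - 2 * lam) / lam \<le> -1"
    using lam_pos by (simp add: pos_divide_le_eq)
  with False show ?thesis
    by (simp add: Sld_smooth_def Sld_def Stilde_def S_eq_minus_1)
qed

lemma Sld_smooth_eq_right: "2 * pi - d \<le> x \<Longrightarrow> Sld_smooth x = 1 - gam d"
  using lam_pos lam_le d_le_pi pi_gt_zero
  by (simp add: Sld_smooth_def S_eq_1 pos_le_divide_eq)

lemma Sld_eq_near_left_end: "-d \<le> x \<Longrightarrow> x < -d + lam \<Longrightarrow> Sld S lam d x = 1 - gam d"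
  using lam_pos lam_le
  by (simp add: Sld_def Stilde_def S_eq_minus_1 pos_divide_le_eq)

lemma Cinf_Sld_smooth: "Cinf Sld_smooth"
proof -
  have affine: "Sld_smooth = (\<lambda>x. S (1 / lam * x + -2) - S (1 / lam * x + (d - 2 * lam) / lam) + (1 - gam d))"
    using lam_pos by (intro ext) (simp add: Sld_smooth_def field_simps)
  show ?thesis
    unfolding affine by (intro Cinf_add_const Cinf_diff Cinf_compose_affine Cinf_S)
qed

definition Sld_ext :: "real \<Rightarrow> real" where
  "Sld_ext = periodic_ext (-d) (Sld S lam d)"

lemma Sld_ext_eq_Sld:
  assumes "-d \<le> x" "x \<le> 2 * pi - d"
  shows "Sld_ext x = Sld S lam d x"
proof (cases "x = 2 * pi - d")
  case True
  have "Sld_ext (-d + 2 * pi) = Sld_ext (-d)"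
    using periodic2pi_periodic_ext[of "-d" "Sld S lam d"] unfolding Sld_ext_def periodic2pi_def by blast
  then have "Sld_ext x = Sld_ext (-d)"
    using True by simp
  also have "\<dots> = 1 - gam d"
    using lam_pos by (simp add: Sld_ext_def periodic_ext_eq Sld_eq_near_left_end)
  also have "\<dots> = Sld S lam d x"
    using True Sld_smooth_eq_Sld[of x] Sld_smooth_eq_right[of x] d_le_pi by simp
  finally show ?thesis .
qed (use assms in \<open>simp add: Sld_ext_def periodic_ext_eq\<close>)

lemma Sld_ext_eq_Sld_smooth:
  assumes "-d < x" "x < 2 * pi - d + lam"
  shows "Sld_ext x = Sld_smooth x"
proof (cases "x \<le> 2 * pi - d")
  case False
  have "Sld_ext x = Sld_ext (x - 2 * pi)"
    using periodic2pi_periodic_ext[of "-d" "Sld S lam d"]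
    unfolding Sld_ext_def periodic2pi_def by (metis diff_add_cancel)
  also have "\<dots> = 1 - gam d"
  proof -
    have "-d \<le> x - 2 * pi" "x - 2 * pi < -d + lam" "lam < 2 * pi"
      using False assms lam_le d_le_pi by auto
    then show ?thesis
      by (simp add: Sld_ext_def periodic_ext_eq Sld_eq_near_left_end)
  qed
  also have "\<dots> = Sld_smooth x"
    using False by (simp add: Sld_smooth_eq_right)
  finally show ?thesis .
qed (use assms Sld_ext_eq_Sld Sld_smooth_eq_Sld in simp)

lemma Cinf_Sld_ext: "Cinf Sld_ext"
  using lam_pos Sld_ext_eq_Sld_smooth
  by (intro Cinf_periodic2pi_if_eq_Cinf[OF _ Cinf_Sld_smooth, of _ "-d" "2 * pi - d + lam"])
    (auto simp: Sld_ext_def periodic2pi_periodic_ext)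

lemma integral_Sld_smooth: "integral {-d..2 * pi - d} Sld_smooth = 0"
proof -
  have cont_S: "continuous_on UNIV S"
    by (rule Cinf_imp_continuous[OF Cinf_S])
  define G where "G x = lam * integral0 S ((x - 2 * lam) / lam)" for x
  have G': "(G has_real_derivative S ((x - 2 * lam) / lam)) (at x)" for x
  proof -
    have "((\<lambda>x. integral0 S ((x - 2 * lam) / lam)) has_real_derivative
        S ((x - 2 * lam) / lam) * (1 / lam)) (at x)"
      by (rule DERIV_chain2[OF integral0_has_derivative[OF cont_S]])
        (use lam_pos in \<open>auto intro!: derivative_eq_intros\<close>)
    then show ?thesis
      unfolding G_def[abs_def] using lam_pos by (auto dest: DERIV_cmult[where c = lam])
  qed
  have "((\<lambda>x. G x - G (x + d) + (1 - gam d) * x) has_real_derivative Sld_smooth x) (at x)" for x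
  proof -
    have G_shift: "((\<lambda>x. G (x + d)) has_real_derivative S ((x + d - 2 * lam) / lam) * 1) (at x)"
      by (rule DERIV_chain2[OF G']) (auto intro!: derivative_eq_intros)
    show ?thesis
      using DERIV_add[OF DERIV_diff[OF G' G_shift] DERIV_cmult[OF DERIV_ident, of "1 - gam d"]]
      by (simp add: Sld_smooth_def algebra_simps)
  qed
  then have "integral {-d..2 * pi - d} Sld_smooth =
      (G 0 - G (-d)) - (G (2 * pi) - G (2 * pi - d)) + 2 * pi * (1 - gam d)"
    using d_le_pi lam_pos lam_le by (subst integral_eq_antiderivative_diff) (auto simp: algebra_simps)
  also have "G 0 - G (-d) = -1 * (0 - (-d))"
    using lam_pos lam_le
    by (intro antiderivative_diff_eq_const[OF G'] S_eq_minus_1) (auto simp: pos_divide_le_eq)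
  also have "G (2 * pi) - G (2 * pi - d) = 1 * (2 * pi - (2 * pi - d))"
    using lam_pos lam_le d_le_pi
    by (intro antiderivative_diff_eq_const[OF G'] S_eq_1) (auto simp: pos_le_divide_eq)
  finally show ?thesis
    by (simp add: gam_def)
qed

lemma mean_zero_periodic_Sld_ext: "mean_zero_periodic Sld_ext"
proof -
  have cont: "continuous_on UNIV Sld_ext"
    by (rule Cinf_imp_continuous[OF Cinf_Sld_ext])
  have periodic: "periodic2pi Sld_ext"
    by (simp add: Sld_ext_def periodic2pi_periodic_ext)
  have "integral {-pi..pi} Sld_ext = integral {-d..2 * pi - d} Sld_ext"
    using integral_period_shift[OF cont periodic, of "-d"] by (simp add: algebra_simps)
  also have "\<dots> = integral {-d..2 * pi - d} Sld_smooth"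
    by (intro integral_cong) (simp add: Sld_ext_eq_Sld Sld_smooth_eq_Sld)
  finally show ?thesis
    using cont periodic integral_Sld_smooth by (simp add: mean_zero_periodic_def)
qed

lemma Erdl_eq_funpow_primitive_Sld_ext: "Erdl S r d lam = (primitive ^^ r) Sld_ext"
  unfolding Erdl_def
proof (rule the_equality)
  have "(deriv ^^ r) ((primitive ^^ r) Sld_ext) = Sld_ext"
    using funpow_deriv_funpow_primitive[OF mean_zero_periodic_Sld_ext, of r r] by simp
  then show "periodic2pi ((primitive ^^ r) Sld_ext) \<and> Cinf ((primitive ^^ r) Sld_ext) \<and>
      integral {-pi..pi} ((primitive ^^ r) Sld_ext) = 0 \<and>
      (\<forall>x\<in>{-d..2 * pi - d}. (deriv ^^ r) ((primitive ^^ r) Sld_ext) x = Sld S lam d x)"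
    using mean_zero_periodic_funpow_primitive[OF mean_zero_periodic_Sld_ext, of r]
      Cinf_funpow_primitive[OF mean_zero_periodic_Sld_ext Cinf_Sld_ext] Sld_ext_eq_Sld
    by (simp add: mean_zero_periodic_def)
next
  fix f
  assume f: "periodic2pi f \<and> Cinf f \<and> integral {-pi..pi} f = 0 \<and>
      (\<forall>x\<in>{-d..2 * pi - d}. (deriv ^^ r) f x = Sld S lam d x)"
  have "(deriv ^^ r) f = Sld_ext"
  proof
    fix x
    have "(deriv ^^ r) f x = (deriv ^^ r) f (reduce2pi (-d) x)"
      using periodic2pi_apply_reduce2pi[OF periodic2pi_funpow_deriv] f by simp
    also have "\<dots> = Sld_ext x"
      using f reduce2pi_bounds[of "-d" x] by (simp add: Sld_ext_def periodic_ext_def)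
    finally show "(deriv ^^ r) f x = Sld_ext x" .
  qed
  then show "f = (primitive ^^ r) Sld_ext"
    using funpow_primitive_funpow_deriv[of r f] f by (simp add: Cinf_def)
qed

definition smoothing_error :: "real \<Rightarrow> real" where
  "smoothing_error x = primitive Sld_ext x - tent d x"

lemma smoothing_error_has_derivative:
  assumes "x \<in> {-d<..<2 * pi - d} - {0}"
  shows "(smoothing_error has_real_derivative Stilde S lam d x - sgn x) (at x)"
proof -
  have "(smoothing_error has_real_derivative Sld_ext x - (sgn x - gam d)) (at x)"
    unfolding smoothing_error_def[abs_def] using mean_zero_periodic_Sld_ext
    by (intro DERIV_diff primitive_has_derivative tent_has_derivative assms)
      (simp add: mean_zero_periodic_def)
  moreover have "Sld_ext x = Stilde S lam d x - gam d"
    using assms Sld_ext_eq_Sld by (simp add: Sld_def)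
  ultimately show ?thesis
    by simp
qed

lemma mean_zero_periodic_smoothing_error: "mean_zero_periodic smoothing_error"
  unfolding smoothing_error_def[abs_def] using lam_pos lam_le d_le_pi
  by (intro mean_zero_periodic_diff mean_zero_periodic_primitive mean_zero_periodic_Sld_ext
      mean_zero_periodic_tent) auto

lemma abs_Stilde_minus_sgn_le: "\<bar>Stilde S lam d x - sgn x\<bar> \<le> 2"
proof -
  have "\<bar>Stilde S lam d x\<bar> \<le> 1"
    using abs_S_le_1 by (simp add: Stilde_def)
  moreover have "\<bar>sgn x\<bar> \<le> (1 :: real)"
    by (simp add: abs_sgn_eq)
  ultimately show ?thesis
    by linarith
qed

lemma abs_smoothing_error_diff_le_by_Stilde:
  assumes "a \<le> y" "-d \<le> a" "y \<le> 2 * pi - d" "0 \<notin> {a<..<y}"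
    and "\<And>t. a < t \<Longrightarrow> t < y \<Longrightarrow> \<bar>Stilde S lam d t - sgn t\<bar> \<le> M"
  shows "\<bar>smoothing_error y - smoothing_error a\<bar> \<le> M * y - M * a"
proof -
  have "continuous_on {a..y} smoothing_error"
    using mean_zero_periodic_smoothing_error
    by (auto simp: mean_zero_periodic_def intro: continuous_on_subset)
  from abs_diff_le_of_deriv_bound[OF assms(1) this smoothing_error_has_derivative assms(5)]
  show ?thesis
    using assms(1-4) by (auto simp: right_diff_distrib)
qed

lemma smoothing_error_eq_right:
  "3 * lam \<le> y \<Longrightarrow> y \<le> 2 * pi - d \<Longrightarrow> smoothing_error y = smoothing_error (3 * lam)"
  using abs_smoothing_error_diff_le_by_Stilde[of "3 * lam" y 0] lam_pos lam_le Stilde_eq_sgn by auto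

lemma smoothing_error_eq_left:
  "3 * lam - d \<le> y \<Longrightarrow> y \<le> 0 \<Longrightarrow> smoothing_error 0 = smoothing_error y"
  using abs_smoothing_error_diff_le_by_Stilde[of y 0 0] lam_pos lam_le d_le_pi Stilde_eq_sgn by auto

lemma abs_smoothing_error_diff_0_le:
  assumes "-d \<le> x" "x \<le> 2 * pi - d"
  shows "\<bar>smoothing_error x - smoothing_error 0\<bar> \<le> 12 * lam"
proof -
  have near_0: "\<bar>smoothing_error y - smoothing_error 0\<bar> \<le> 2 * y - 2 * 0"
    if "0 \<le> y" "y \<le> 3 * lam" for y
    by (rule abs_smoothing_error_diff_le_by_Stilde[OF _ _ _ _ abs_Stilde_minus_sgn_le])
      (use that lam_pos lam_le d_le_pi in auto)
  have near_left_end: "\<bar>smoothing_error y - smoothing_error (-d)\<bar> \<le> 2 * y - 2 * (-d)"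
    if "-d \<le> y" "y \<le> 3 * lam - d" for y
    by (rule abs_smoothing_error_diff_le_by_Stilde[OF _ _ _ _ abs_Stilde_minus_sgn_le])
      (use that lam_pos lam_le d_le_pi in auto)
  have "smoothing_error (-d) = smoothing_error (-d + 2 * pi)"
    using mean_zero_periodic_smoothing_error unfolding mean_zero_periodic_def periodic2pi_def by metis
  also have "\<dots> = smoothing_error (3 * lam)"
    using lam_le d_le_pi by (intro smoothing_error_eq_right) auto
  finally have ends: "smoothing_error (-d) = smoothing_error (3 * lam)" .
  consider "x \<le> 3 * lam - d" | "3 * lam - d \<le> x" "x \<le> 0" | "0 \<le> x" "x \<le> 3 * lam" | "3 * lam \<le> x"
    by linarith
  then show ?thesis
  proof cases
    case 1
    then show ?thesis
      using near_left_end[of x] near_0[of "3 * lam"] ends assms lam_pos by simp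
  next
    case 2
    then show ?thesis
      using smoothing_error_eq_left[of x] lam_pos by simp
  next
    case 3
    then show ?thesis
      using near_0[of x] by simp
  next
    case 4
    then show ?thesis
      using smoothing_error_eq_right[of x] near_0[of "3 * lam"] assms lam_pos by simp
  qed
qed

lemma abs_smoothing_error_le: "\<bar>smoothing_error x\<bar> \<le> 24 * lam"
proof (rule abs_le_of_oscillation_le[OF mean_zero_periodic_smoothing_error])
  have osc_0: "\<bar>smoothing_error x - smoothing_error 0\<bar> \<le> 12 * lam" for x
  proof -
    have "smoothing_error x = smoothing_error (reduce2pi (-d) x)"
      using mean_zero_periodic_smoothing_error periodic2pi_apply_reduce2pi[of smoothing_error "-d" x]
      by (simp add: mean_zero_periodic_def)
    then show ?thesis
      using abs_smoothing_error_diff_0_le reduce2pi_bounds[of "-d" x] by simp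
  qed
  then show "\<bar>smoothing_error x - smoothing_error y\<bar> \<le> 24 * lam" for x y
  proof -
    have "\<bar>smoothing_error x - smoothing_error y\<bar> \<le> \<bar>smoothing_error x - smoothing_error 0\<bar> + \<bar>smoothing_error y - smoothing_error 0\<bar>"
      using abs_triangle_ineq4[of "smoothing_error x - smoothing_error 0" "smoothing_error y - smoothing_error 0"] by simp
    with osc_0[of x] osc_0[of y] show ?thesis
      by linarith
  qed
qed

lemma abs_Erdl_minus_Erd_le:
  assumes "1 \<le> r"
  shows "\<bar>Erdl S r d lam x - Erd r d x\<bar> \<le> pi ^ (r - 1) * (24 * lam)"
proof -
  obtain m where r: "r = Suc m"
    using assms by (cases r) auto
  have "Erdl S r d lam = (primitive ^^ m) (primitive Sld_ext)"
    unfolding Erdl_eq_funpow_primitive_Sld_ext r by (simp add: funpow_Suc_right del: funpow.simps)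
  moreover have "Erd r d = (primitive ^^ m) (tent d)"
    using lam_pos lam_le d_le_pi Erd_eq_funpow_primitive_tent[of d r] by (simp add: r)
  ultimately show ?thesis
    using abs_funpow_primitive_diff_le[OF mean_zero_periodic_primitive[OF mean_zero_periodic_Sld_ext]
        mean_zero_periodic_tent abs_smoothing_error_le[unfolded smoothing_error_def]]
      lam_pos lam_le d_le_pi by (simp add: r)
qed

end

theorem lemma5p2:
  fixes S :: "real \<Rightarrow> real" and r :: nat
  assumes S_smooth: "Cinf S"
    and S_mono: "mono S"
    and S_odd: "\<And>x. S (- x) = - S x"
    and S_sign: "\<And>x. \<bar>x\<bar> \<ge> 1 \<Longrightarrow> S x = sgn x"
    and r_pos: "r \<ge> 1"
  shows "\<exists>c5>0. \<forall>d lam. 0 < d \<and> d \<le> pi \<and> 0 < lam \<and> lam \<le> d / 3 \<longrightarrow>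
           unorm (\<lambda>x. Erdl S r d lam x - Erd r d x) \<le> c5 * lam"
proof (intro exI[of _ "24 * pi ^ (r - 1)"] conjI allI impI)
  fix d lam :: real
  assume "0 < d \<and> d \<le> pi \<and> 0 < lam \<and> lam \<le> d / 3"
  then have "smoothed_step S d lam"
    using S_smooth S_mono S_sign by (intro smoothed_step.intro) auto
  then have "\<bar>Erdl S r d lam x - Erd r d x\<bar> \<le> pi ^ (r - 1) * (24 * lam)" for x
    using r_pos by (rule smoothed_step.abs_Erdl_minus_Erd_le)
  then show "unorm (\<lambda>x. Erdl S r d lam x - Erd r d x) \<le> 24 * pi ^ (r - 1) * lam"
    unfolding unorm_def by (intro cSUP_least) (auto simp: algebra_simps)
qed simp

end
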